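(* Let $\mathbb F$ be an infinite field, $\mathbf z=(z_1,\dots,z_m)$ indeterminates, and $L(\mathbf z)\in\mathrm{Ten}_{\mathbb F[\mathbf z]}(n,d)$ a tensor whose entries are polynomials in $\mathbf z$. If $\mathrm{brk}_{\mathbb F}(L(\boldsymbol\beta))\le r$ for all $\boldsymbol\beta\in\mathbb F^m$, then $\mathrm{brk}_{\mathbb F(\mathbf z)}(L(\mathbf z))\le r$ and $\mathrm{brk}_{\overline{\mathbb F(\mathbf z)}}(L(\mathbf z))\le r$.
   Context: For a field $\mathbb L$, $I_{\mathbb L,r}$ is the ideal of polynomials on $\mathrm{Ten}_{\mathbb L}(n,d)=(\mathbb L^n)^{\otimes d}$ vanishing on all tensors of tensor rank $\le r$, and $\mathrm{brk}_{\mathbb L}(T)\le r$ means every polynomial in $I_{\mathbb L,r}$ vanishes at $T$ (i.e., $T$ lies in the Zariski closure of the tensors of rank $\le r$). Tensor rank is the least number of tensors $\mathbf v_1\otimes\cdots\otimes\mathbf v_d$ summing to the tensor. *)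

theory Defs
  imports "HOL-Library.Poly_Mapping" "HOL-Computational_Algebra.Fraction_Field"
          "HOL-Algebra.Algebraic_Closure_Type"
begin

text \<open>Multivariate polynomials over a commutative ring 'a in variables of type 'v are
  elements of the poly_mapping type from monomials (finitely supported exponent vectors) to 'a.\<close>
definition mpoly_eval :: "(('v \<Rightarrow>\<^sub>0 nat) \<Rightarrow>\<^sub>0 'a::comm_ring_1) \<Rightarrow> ('v \<Rightarrow> 'a) \<Rightarrow> 'a" where
  "mpoly_eval p x = (\<Sum>mn\<in>Poly_Mapping.keys p. Poly_Mapping.lookup p mn * (\<Prod>v\<in>Poly_Mapping.keys mn. x v ^ Poly_Mapping.lookup mn v))"

text \<open>Index set of Ten(n,d) = (L^n)^{\<otimes>d}: lists of length d with entries < n.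
  A tensor is a function from index lists to the field (only values on ten_idx matter).\<close>
definition ten_idx :: "nat \<Rightarrow> nat \<Rightarrow> nat list set" where
  "ten_idx n d = {is. length is = d \<and> set is \<subseteq> {..<n}}"

definition tensor_rank_le :: "nat \<Rightarrow> nat \<Rightarrow> nat \<Rightarrow> (nat list \<Rightarrow> 'a::field) \<Rightarrow> bool" where
  "tensor_rank_le n d r T \<longleftrightarrow>
     (\<exists>v :: nat \<Rightarrow> nat \<Rightarrow> nat \<Rightarrow> 'a. \<forall>is\<in>ten_idx n d.
        T is = (\<Sum>k<r. \<Prod>j<d. v k j (is ! j)))"

definition ten_poly :: "nat \<Rightarrow> nat \<Rightarrow> ((nat list \<Rightarrow>\<^sub>0 nat) \<Rightarrow>\<^sub>0 'a::field) \<Rightarrow> bool" where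
  "ten_poly n d p \<longleftrightarrow> (\<forall>mn\<in>Poly_Mapping.keys p. Poly_Mapping.keys mn \<subseteq> ten_idx n d)"

definition rank_ideal :: "nat \<Rightarrow> nat \<Rightarrow> nat \<Rightarrow> ((nat list \<Rightarrow>\<^sub>0 nat) \<Rightarrow>\<^sub>0 'a::field) set" where
  "rank_ideal n d r = {p. ten_poly n d p \<and>
      (\<forall>T :: nat list \<Rightarrow> 'a. tensor_rank_le n d r T \<longrightarrow> mpoly_eval p T = 0)}"

definition border_rank_le :: "nat \<Rightarrow> nat \<Rightarrow> nat \<Rightarrow> (nat list \<Rightarrow> 'a::field) \<Rightarrow> bool" where
  "border_rank_le n d r T \<longleftrightarrow> (\<forall>p\<in>(rank_ideal n d r :: ((nat list \<Rightarrow>\<^sub>0 nat) \<Rightarrow>\<^sub>0 'a) set).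
      mpoly_eval p T = 0)"

definition to_fract :: "'a::idom \<Rightarrow> 'a fract" where
  "to_fract x = Fract x 1"

end

theory Submission
  imports Defs "HOL-Computational_Algebra.Polynomial"
begin

(*
  Let \<psi> be a ring homomorphism from F[z] into a field K, e.g. the embedding into F(z) or into its
  algebraic closure. Given p in the ideal of K-polynomials
  vanishing on tensors of rank \<le> r, choose an F-basis B of the span of its coefficients and write
  p = \<Sum>_{b\<in>B} b \<cdot> q_b with every q_b defined over F. Tensors of rank \<le> r over F keep rank \<le> r
  over K, so linear independence of B puts each q_b into the corresponding ideal over F. By
  hypothesis q_b(L(\<beta>)) = 0 for all \<beta> \<in> F^m; as F is infinite, the polynomial q_b(L(z)) \<in> F[z] is
  therefore zero, and applying \<psi> gives q_b(\<psi> L) = 0, whence p(\<psi> L) = 0.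
*)

definition is_ring_hom :: "('a::comm_ring_1 \<Rightarrow> 'b::comm_ring_1) \<Rightarrow> bool" where
  "is_ring_hom f \<longleftrightarrow>
     f 0 = 0 \<and> f 1 = 1 \<and> (\<forall>a b. f (a + b) = f a + f b) \<and> (\<forall>a b. f (a * b) = f a * f b)"

lemma is_ring_hom_sum: "is_ring_hom f \<Longrightarrow> f (\<Sum>i\<in>I. g i) = (\<Sum>i\<in>I. f (g i))"
  by (induction I rule: infinite_finite_induct) (auto simp: is_ring_hom_def)

lemma is_ring_hom_prod: "is_ring_hom f \<Longrightarrow> f (\<Prod>i\<in>I. g i) = (\<Prod>i\<in>I. f (g i))"
  by (induction I rule: infinite_finite_induct) (auto simp: is_ring_hom_def)

lemma is_ring_hom_power: "is_ring_hom f \<Longrightarrow> f (x ^ k) = f x ^ k"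
  by (induction k) (auto simp: is_ring_hom_def)

lemma is_ring_hom_comp: "is_ring_hom f \<Longrightarrow> is_ring_hom g \<Longrightarrow> is_ring_hom (g \<circ> f)"
  by (simp add: is_ring_hom_def)

lemma is_ring_hom_to_fract: "is_ring_hom (to_fract :: 'a::idom \<Rightarrow> 'a fract)"
  by (simp add: is_ring_hom_def to_fract_def Zero_fract_def One_fract_def)

lemma is_ring_hom_to_ac: "is_ring_hom (to_ac :: 'a::field \<Rightarrow> 'a alg_closure)"
  by (simp add: is_ring_hom_def)

lemma is_ring_hom_single_0: "is_ring_hom (Poly_Mapping.single 0 :: 'a::comm_ring_1 \<Rightarrow> ('v \<Rightarrow>\<^sub>0 nat) \<Rightarrow>\<^sub>0 'a)"
  by (simp add: is_ring_hom_def single_add mult_single)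

lemma lookup_map:
  "f 0 = 0 \<Longrightarrow> Poly_Mapping.lookup (Poly_Mapping.map f p) k = f (Poly_Mapping.lookup p k)"
  by (simp add: map.rep_eq when_def)

lemma keys_map_subset: "Poly_Mapping.keys (Poly_Mapping.map f p) \<subseteq> Poly_Mapping.keys p"
  by (auto simp: in_keys_iff map.rep_eq)

lemma poly_mapping_map_map:
  "f 0 = 0 \<Longrightarrow> g 0 = 0 \<Longrightarrow> Poly_Mapping.map f (Poly_Mapping.map g p) = Poly_Mapping.map (f \<circ> g) p"
  by (rule poly_mapping_eqI) (simp add: lookup_map)

lemma poly_mapping_map_ident: "Poly_Mapping.map (\<lambda>a. a) p = p"
  by (rule poly_mapping_eqI) (simp add: lookup_map)

lemma poly_mapping_sum_single:
  "p = (\<Sum>k\<in>Poly_Mapping.keys p. Poly_Mapping.single k (Poly_Mapping.lookup p k))"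
  by (rule poly_mapping_eqI) (simp add: lookup_sum lookup_single when_def sum.delta in_keys_iff)

definition monomial_eval :: "('v \<Rightarrow> 'a::comm_semiring_1) \<Rightarrow> ('v \<Rightarrow>\<^sub>0 nat) \<Rightarrow> 'a" where
  "monomial_eval x m = (\<Prod>v\<in>Poly_Mapping.keys m. x v ^ Poly_Mapping.lookup m v)"

lemma monomial_eval_superset:
  assumes "finite V" "Poly_Mapping.keys m \<subseteq> V"
  shows "monomial_eval x m = (\<Prod>v\<in>V. x v ^ Poly_Mapping.lookup m v)"
  unfolding monomial_eval_def using assms
  by (intro prod.mono_neutral_left) (auto simp: in_keys_iff)

lemma monomial_eval_zero [simp]: "monomial_eval x 0 = 1"
  by (simp add: monomial_eval_def)

lemma monomial_eval_add: "monomial_eval x (m + m') = monomial_eval x m * monomial_eval x m'"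
proof -
  let ?V = "Poly_Mapping.keys m \<union> Poly_Mapping.keys m'"
  have "Poly_Mapping.keys (m + m') \<subseteq> ?V" by (rule keys_add)
  then show ?thesis
    by (simp add: monomial_eval_superset[of ?V] lookup_add power_add prod.distrib)
qed

lemma monomial_eval_hom:
  "is_ring_hom f \<Longrightarrow> monomial_eval (f \<circ> x) m = f (monomial_eval x m)"
  by (simp add: monomial_eval_def is_ring_hom_prod is_ring_hom_power)

lemma mpoly_eval_monomial_eval:
  "mpoly_eval p x = (\<Sum>m\<in>Poly_Mapping.keys p. Poly_Mapping.lookup p m * monomial_eval x m)"
  by (simp add: mpoly_eval_def monomial_eval_def)

lemma mpoly_eval_superset:
  assumes "finite A" "Poly_Mapping.keys p \<subseteq> A"
  shows "mpoly_eval p x = (\<Sum>m\<in>A. Poly_Mapping.lookup p m * monomial_eval x m)"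
  unfolding mpoly_eval_monomial_eval using assms
  by (intro sum.mono_neutral_left) (auto simp: in_keys_iff)

lemma mpoly_eval_single [simp]: "mpoly_eval (Poly_Mapping.single m c) x = c * monomial_eval x m"
  by (simp add: mpoly_eval_monomial_eval)

lemma mpoly_eval_zero [simp]: "mpoly_eval 0 x = 0"
  by (simp add: mpoly_eval_def)

lemma mpoly_eval_add: "mpoly_eval (p + q) x = mpoly_eval p x + mpoly_eval q x"
proof -
  let ?A = "Poly_Mapping.keys p \<union> Poly_Mapping.keys q"
  have "Poly_Mapping.keys (p + q) \<subseteq> ?A" by (rule keys_add)
  then show ?thesis
    by (simp add: mpoly_eval_superset[of ?A] lookup_add distrib_right sum.distrib)
qed

lemma mpoly_eval_sum: "mpoly_eval (\<Sum>i\<in>I. p i) x = (\<Sum>i\<in>I. mpoly_eval (p i) x)"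
  by (induction I rule: infinite_finite_induct) (auto simp: mpoly_eval_add)

lemma mpoly_eval_mult: "mpoly_eval (p * q) x = mpoly_eval p x * mpoly_eval q x"
proof -
  let ?P = "Poly_Mapping.keys p" and ?Q = "Poly_Mapping.keys q"
  have "p * q = (\<Sum>k\<in>?P. \<Sum>l\<in>?Q.
      Poly_Mapping.single (k + l) (Poly_Mapping.lookup p k * Poly_Mapping.lookup q l))"
    by (subst (1 2) poly_mapping_sum_single) (simp only: sum_product mult_single)
  then have "mpoly_eval (p * q) x = (\<Sum>k\<in>?P. \<Sum>l\<in>?Q.
      Poly_Mapping.lookup p k * Poly_Mapping.lookup q l * monomial_eval x (k + l))"
    by (simp only: mpoly_eval_sum mpoly_eval_single)
  then show ?thesis
    by (simp add: monomial_eval_add mpoly_eval_monomial_eval sum_product mult_ac)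
qed

lemma is_ring_hom_mpoly_eval: "is_ring_hom (\<lambda>p. mpoly_eval p x)"
  by (simp add: is_ring_hom_def mpoly_eval_add mpoly_eval_mult flip: single_one)

lemma mpoly_eval_map_hom:
  assumes "is_ring_hom f"
  shows "mpoly_eval (Poly_Mapping.map f p) (f \<circ> x) = f (mpoly_eval p x)"
proof -
  have "f 0 = 0" using assms by (simp add: is_ring_hom_def)
  then have "mpoly_eval (Poly_Mapping.map f p) (f \<circ> x) =
      (\<Sum>m\<in>Poly_Mapping.keys p. f (Poly_Mapping.lookup p m) * f (monomial_eval x m))"
    by (simp add: mpoly_eval_superset[OF _ keys_map_subset] lookup_map monomial_eval_hom[OF assms])
  also have "\<dots> = f (mpoly_eval p x)"
    using assms by (simp add: mpoly_eval_monomial_eval is_ring_hom_sum is_ring_hom_def)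
  finally show ?thesis .
qed

lemma sum_powers_eq_0_imp_coeff_eq_0:
  fixes a :: "nat \<Rightarrow> 'a::field"
  assumes "infinite (UNIV :: 'a set)" "finite K" "\<And>t. (\<Sum>k\<in>K. a k * t ^ k) = 0" "k \<in> K"
  shows "a k = 0"
proof -
  define q where "q = (\<Sum>k\<in>K. monom (a k) k)"
  have "poly q t = 0" for t using assms(3) by (simp add: q_def poly_sum poly_monom)
  then have "q = 0" using poly_roots_finite[of q] assms(1) by auto
  moreover have "coeff q k = a k"
    using assms(2,4) by (simp add: q_def coeff_sum coeff_monom sum.delta')
  ultimately show ?thesis by simp
qed

lemma sum_monomials_eq_0_imp_coeff_eq_0:
  fixes c :: "'s \<Rightarrow> 'a::field" and e :: "'s \<Rightarrow> 'v \<Rightarrow> nat"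
  assumes "infinite (UNIV :: 'a set)" "finite V" "finite S"
    and "inj_on (\<lambda>s. restrict (e s) V) S"
    and "\<And>\<beta>. (\<Sum>s\<in>S. c s * (\<Prod>v\<in>V. \<beta> v ^ e s v)) = 0"
    and "s \<in> S"
  shows "c s = 0"
  using assms(2-)
proof (induction V arbitrary: S s rule: finite_induct)
  case empty
  then have "S = {s}" by (auto simp: inj_on_def)
  with empty.prems show ?case by simp
next
  case (insert w V)
  define S\<^sub>0 where "S\<^sub>0 = {s'\<in>S. e s' w = e s w}"
  have fin0: "finite S\<^sub>0" and mem0: "s \<in> S\<^sub>0" using insert.prems(1,4) by (auto simp: S\<^sub>0_def)
  have vanish0: "(\<Sum>s'\<in>S\<^sub>0. c s' * (\<Prod>v\<in>V. \<beta> v ^ e s' v)) = 0" for \<beta>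
  proof -
    define A where "A k = (\<Sum>s'\<in>{s'\<in>S. e s' w = k}. c s' * (\<Prod>v\<in>V. \<beta> v ^ e s' v))" for k
    have "(\<Sum>k\<in>(\<lambda>s'. e s' w) ` S. A k * t ^ k) = 0" for t
    proof -
      \<comment> \<open>Substitute \<open>t\<close> for \<open>w\<close> and group the terms by their degree in \<open>w\<close>.\<close>
      have "(\<Sum>s'\<in>S. c s' * (\<Prod>v\<in>insert w V. (\<beta>(w:=t)) v ^ e s' v))
          = (\<Sum>s'\<in>S. t ^ e s' w * (c s' * (\<Prod>v\<in>V. \<beta> v ^ e s' v)))"
      proof (intro sum.cong refl)
        fix s' assume "s' \<in> S"
        have "(\<Prod>v\<in>V. (\<beta>(w:=t)) v ^ e s' v) = (\<Prod>v\<in>V. \<beta> v ^ e s' v)"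
          using insert.hyps(2) by (intro prod.cong) auto
        then show "c s' * (\<Prod>v\<in>insert w V. (\<beta>(w:=t)) v ^ e s' v)
            = t ^ e s' w * (c s' * (\<Prod>v\<in>V. \<beta> v ^ e s' v))"
          using insert.hyps by simp
      qed
      also have "\<dots> = (\<Sum>k\<in>(\<lambda>s'. e s' w) ` S. A k * t ^ k)"
        unfolding sum.image_gen[OF \<open>finite S\<close>, of _ "\<lambda>s'. e s' w"] A_def sum_distrib_right
        by (intro sum.cong refl) (simp add: mult.commute)
      finally show ?thesis using insert.prems(3) by metis
    qed
    then show ?thesis
      using sum_powers_eq_0_imp_coeff_eq_0[OF assms(1), of "(\<lambda>s'. e s' w) ` S" A]
        insert.prems(1,4)
      by (simp add: A_def S\<^sub>0_def)
  qed
  have inj0: "inj_on (\<lambda>s. restrict (e s) V) S\<^sub>0"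
  proof (rule inj_onI)
    fix s\<^sub>1 s\<^sub>2 assume s12: "s\<^sub>1 \<in> S\<^sub>0" "s\<^sub>2 \<in> S\<^sub>0" "restrict (e s\<^sub>1) V = restrict (e s\<^sub>2) V"
    have "e s\<^sub>1 v = e s\<^sub>2 v" if "v \<in> V" for v
      using s12(3) that by (metis restrict_apply')
    then have "restrict (e s\<^sub>1) (insert w V) = restrict (e s\<^sub>2) (insert w V)"
      using s12(1,2) by (intro restrict_ext) (auto simp: S\<^sub>0_def)
    moreover have "s\<^sub>1 \<in> S" "s\<^sub>2 \<in> S" using s12(1,2) by (simp_all add: S\<^sub>0_def)
    ultimately show "s\<^sub>1 = s\<^sub>2" by (rule inj_onD[OF insert.prems(2)])
  qed
  show ?case by (rule insert.IH[OF fin0 inj0 vanish0 mem0])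
qed

lemma inj_on_restrict_lookup:
  assumes "\<And>m. m \<in> M \<Longrightarrow> Poly_Mapping.keys m \<subseteq> V"
  shows "inj_on (\<lambda>m. restrict (Poly_Mapping.lookup m) V) M"
proof (rule inj_onI)
  fix m\<^sub>1 m\<^sub>2
  assume m12: "m\<^sub>1 \<in> M" "m\<^sub>2 \<in> M"
    "restrict (Poly_Mapping.lookup m\<^sub>1) V = restrict (Poly_Mapping.lookup m\<^sub>2) V"
  show "m\<^sub>1 = m\<^sub>2"
  proof (rule poly_mapping_eqI)
    fix v show "Poly_Mapping.lookup m\<^sub>1 v = Poly_Mapping.lookup m\<^sub>2 v"
    proof (cases "v \<in> V")
      case True
      then show ?thesis using m12(3) by (metis restrict_apply')
    next
      case False
      then have "v \<notin> Poly_Mapping.keys m\<^sub>1" "v \<notin> Poly_Mapping.keys m\<^sub>2"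
        using m12(1,2) assms by blast+
      then show ?thesis by (simp add: in_keys_iff)
    qed
  qed
qed

lemma mpoly_eval_all_0_iff_0:
  fixes p :: "('v \<Rightarrow>\<^sub>0 nat) \<Rightarrow>\<^sub>0 'a::field"
  assumes "infinite (UNIV :: 'a set)"
  shows "(\<forall>x. mpoly_eval p x = 0) \<longleftrightarrow> p = 0"
proof
  assume eval_0: "\<forall>x. mpoly_eval p x = 0"
  define V where "V = (\<Union>m\<in>Poly_Mapping.keys p. Poly_Mapping.keys m)"
  have "finite V" by (simp add: V_def)
  have inj: "inj_on (\<lambda>m. restrict (Poly_Mapping.lookup m) V) (Poly_Mapping.keys p)"
    by (rule inj_on_restrict_lookup) (auto simp: V_def)
  have vanish: "(\<Sum>m\<in>Poly_Mapping.keys p. Poly_Mapping.lookup p m *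
      (\<Prod>v\<in>V. x v ^ Poly_Mapping.lookup m v)) = 0" for x
  proof -
    have "monomial_eval x m = (\<Prod>v\<in>V. x v ^ Poly_Mapping.lookup m v)" if "m \<in> Poly_Mapping.keys p" for m
      using that \<open>finite V\<close> by (intro monomial_eval_superset) (auto simp: V_def)
    then have "(\<Sum>m\<in>Poly_Mapping.keys p. Poly_Mapping.lookup p m *
        (\<Prod>v\<in>V. x v ^ Poly_Mapping.lookup m v)) = mpoly_eval p x"
      by (simp add: mpoly_eval_monomial_eval)
    then show ?thesis using eval_0 by simp
  qed
  have "Poly_Mapping.lookup p m = 0" if "m \<in> Poly_Mapping.keys p" for m
    using sum_monomials_eq_0_imp_coeff_eq_0[OF assms \<open>finite V\<close> finite_keys inj vanish that] .
  then show "p = 0" by (intro poly_mapping_eqI) (auto simp: in_keys_iff)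
qed simp

lemma vector_space_ring_hom_scale:
  fixes h :: "'a::field \<Rightarrow> 'k::field"
  assumes "is_ring_hom h"
  shows "vector_space (\<lambda>a x. h a * x)"
  using assms by unfold_locales (simp_all add: is_ring_hom_def algebra_simps)

lemma mpoly_decompose_over_subfield:
  fixes h :: "'a::field \<Rightarrow> 'k::field" and p :: "('v \<Rightarrow>\<^sub>0 nat) \<Rightarrow>\<^sub>0 'k"
  assumes hom: "is_ring_hom h"
  obtains B :: "'k set" and q :: "'k \<Rightarrow> ('v \<Rightarrow>\<^sub>0 nat) \<Rightarrow>\<^sub>0 'a"
  where "finite B"
    and "\<And>u. (\<Sum>b\<in>B. h (u b) * b) = 0 \<Longrightarrow> \<forall>b\<in>B. u b = 0"
    and "\<And>b. Poly_Mapping.keys (q b) \<subseteq> Poly_Mapping.keys p"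
    and "\<And>x. mpoly_eval p x = (\<Sum>b\<in>B. b * mpoly_eval (Poly_Mapping.map h (q b)) x)"
proof -
  interpret V: vector_space "\<lambda>a x. h a * x"
    using hom by (rule vector_space_ring_hom_scale)
  let ?P = "Poly_Mapping.keys p"
  obtain B where B: "B \<subseteq> Poly_Mapping.lookup p ` ?P" "V.independent B"
    "Poly_Mapping.lookup p ` ?P \<subseteq> V.span B"
    by (rule V.maximal_independent_subset)
  have "finite B" using B(1) by (rule finite_subset) simp
  have indep: "\<forall>b\<in>B. u b = 0" if "(\<Sum>b\<in>B. h (u b) * b) = 0" for u
    using that B(2) V.dependent_finite[OF \<open>finite B\<close>] by auto
  have "Poly_Mapping.lookup p m \<in> range (\<lambda>u. \<Sum>b\<in>B. h (u b) * b)" if "m \<in> ?P" for m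
    using that B(3) V.span_finite[OF \<open>finite B\<close>] by auto
  then have "\<exists>u. Poly_Mapping.lookup p m = (\<Sum>b\<in>B. h (u b) * b)" if "m \<in> ?P" for m
    using that by auto
  then obtain a where a: "\<And>m. m \<in> ?P \<Longrightarrow> Poly_Mapping.lookup p m = (\<Sum>b\<in>B. h (a m b) * b)"
    by metis
  define q where "q b = (\<Sum>m\<in>?P. Poly_Mapping.single m (a m b))" for b
  have lookup_q: "Poly_Mapping.lookup (q b) m = (if m \<in> ?P then a m b else 0)" for b m
    by (simp add: q_def lookup_sum lookup_single when_def sum.delta)
  have keys_q: "Poly_Mapping.keys (q b) \<subseteq> ?P" for b
    by (auto simp: in_keys_iff lookup_q split: if_splits)
  have "mpoly_eval p x = (\<Sum>b\<in>B. b * mpoly_eval (Poly_Mapping.map h (q b)) x)" for x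
  proof -
    have h0: "h 0 = 0" using hom by (simp add: is_ring_hom_def)
    have eval_q: "mpoly_eval (Poly_Mapping.map h (q b)) x = (\<Sum>m\<in>?P. h (a m b) * monomial_eval x m)" for b
    proof -
      have "Poly_Mapping.keys (Poly_Mapping.map h (q b)) \<subseteq> ?P"
        using keys_map_subset keys_q by (rule subset_trans)
      then show ?thesis by (simp add: mpoly_eval_superset[of ?P] lookup_map[of h, OF h0] lookup_q)
    qed
    have "mpoly_eval p x = (\<Sum>m\<in>?P. \<Sum>b\<in>B. b * (h (a m b) * monomial_eval x m))"
      by (simp add: mpoly_eval_monomial_eval a sum_distrib_left sum_distrib_right mult_ac)
    also have "\<dots> = (\<Sum>b\<in>B. b * (\<Sum>m\<in>?P. h (a m b) * monomial_eval x m))"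
      by (subst sum.swap) (simp add: sum_distrib_left)
    finally show ?thesis by (simp only: eval_q)
  qed
  with \<open>finite B\<close> indep keys_q show thesis by (rule that)
qed

lemma tensor_rank_le_ring_hom:
  assumes "is_ring_hom h" and "tensor_rank_le n d r T"
  shows "tensor_rank_le n d r (h \<circ> T)"
proof -
  obtain v where "\<forall>is\<in>ten_idx n d. T is = (\<Sum>k<r. \<Prod>j<d. v k j (is ! j))"
    using assms(2) by (auto simp: tensor_rank_le_def)
  then have "\<forall>is\<in>ten_idx n d. (h \<circ> T) is = (\<Sum>k<r. \<Prod>j<d. h (v k j (is ! j)))"
    using assms(1) by (simp add: is_ring_hom_sum is_ring_hom_prod)
  then show ?thesis by (auto simp: tensor_rank_le_def)
qed

lemma rank_ideal_decompose_over_subfield: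
  fixes h :: "'a::field \<Rightarrow> 'k::field" and p :: "(nat list \<Rightarrow>\<^sub>0 nat) \<Rightarrow>\<^sub>0 'k"
  assumes hom: "is_ring_hom h" and p: "p \<in> rank_ideal n d r"
  obtains B :: "'k set" and q :: "'k \<Rightarrow> (nat list \<Rightarrow>\<^sub>0 nat) \<Rightarrow>\<^sub>0 'a"
  where "finite B"
    and "\<And>b. b \<in> B \<Longrightarrow> q b \<in> rank_ideal n d r"
    and "\<And>x. mpoly_eval p x = (\<Sum>b\<in>B. b * mpoly_eval (Poly_Mapping.map h (q b)) x)"
proof -
  obtain B q where "finite B"
    and indep: "\<And>u. (\<Sum>b\<in>B. h (u b) * b) = 0 \<Longrightarrow> \<forall>b\<in>B. u b = 0"
    and keys_q: "\<And>b. Poly_Mapping.keys (q b) \<subseteq> Poly_Mapping.keys p"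
    and decomp: "\<And>x. mpoly_eval p x = (\<Sum>b\<in>B. b * mpoly_eval (Poly_Mapping.map h (q b)) x)"
    using mpoly_decompose_over_subfield[OF hom, of p] by blast
  have in_ideal: "q b \<in> rank_ideal n d r" if "b \<in> B" for b
  proof -
    have "ten_poly n d (q b)"
      using p keys_q unfolding rank_ideal_def ten_poly_def by blast
    moreover have "mpoly_eval (q b) T = 0" if rank_T: "tensor_rank_le n d r T" for T :: "nat list \<Rightarrow> 'a"
    proof -
      have "mpoly_eval p (h \<circ> T) = 0"
        using p tensor_rank_le_ring_hom[OF hom rank_T] by (simp add: rank_ideal_def)
      then have "(\<Sum>b\<in>B. h (mpoly_eval (q b) T) * b) = 0"
        by (simp add: decomp mpoly_eval_map_hom[OF hom] mult.commute)
      then show ?thesis using indep[of "\<lambda>b. mpoly_eval (q b) T"] \<open>b \<in> B\<close> by simp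
    qed
    ultimately show ?thesis by (simp add: rank_ideal_def)
  qed
  show thesis by (rule that[OF \<open>finite B\<close> in_ideal decomp])
qed

lemma rank_ideal_vanishes_at_polynomial_tensor:
  fixes L :: "nat list \<Rightarrow> ('m \<Rightarrow>\<^sub>0 nat) \<Rightarrow>\<^sub>0 'a::field"
    and q :: "(nat list \<Rightarrow>\<^sub>0 nat) \<Rightarrow>\<^sub>0 'a"
  assumes "infinite (UNIV :: 'a set)"
    and "\<forall>\<beta>. border_rank_le n d r (\<lambda>is. mpoly_eval (L is) \<beta>)"
    and "q \<in> rank_ideal n d r"
  shows "mpoly_eval (Poly_Mapping.map (Poly_Mapping.single 0) q) L = 0"
proof -
  let ?g = "mpoly_eval (Poly_Mapping.map (Poly_Mapping.single 0) q) L"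
  have "mpoly_eval ?g \<beta> = 0" for \<beta>
  proof -
    let ?ev = "\<lambda>f. mpoly_eval f \<beta>"
    have "mpoly_eval ?g \<beta> =
        mpoly_eval (Poly_Mapping.map ?ev (Poly_Mapping.map (Poly_Mapping.single 0) q)) (?ev \<circ> L)"
      by (rule mpoly_eval_map_hom[OF is_ring_hom_mpoly_eval, symmetric])
    also have "\<dots> = mpoly_eval q (?ev \<circ> L)"
      by (simp add: poly_mapping_map_map comp_def poly_mapping_map_ident)
    also have "\<dots> = 0"
      using assms(2,3) unfolding border_rank_le_def comp_def by blast
    finally show ?thesis .
  qed
  then show ?thesis using mpoly_eval_all_0_iff_0[OF assms(1), of ?g] by simp
qed

lemma border_rank_le_ring_hom_image:
  fixes L :: "nat list \<Rightarrow> ('m \<Rightarrow>\<^sub>0 nat) \<Rightarrow>\<^sub>0 'a::field"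
    and \<psi> :: "(('m \<Rightarrow>\<^sub>0 nat) \<Rightarrow>\<^sub>0 'a) \<Rightarrow> 'k::field"
  assumes "infinite (UNIV :: 'a set)"
    and "\<forall>\<beta>. border_rank_le n d r (\<lambda>is. mpoly_eval (L is) \<beta>)"
    and hom: "is_ring_hom \<psi>"
  shows "border_rank_le n d r (\<lambda>is. \<psi> (L is))"
  unfolding border_rank_le_def
proof
  fix p :: "(nat list \<Rightarrow>\<^sub>0 nat) \<Rightarrow>\<^sub>0 'k"
  assume "p \<in> rank_ideal n d r"
  let ?h = "\<psi> \<circ> Poly_Mapping.single 0"
  obtain B q where "finite B" and q: "\<And>b. b \<in> B \<Longrightarrow> q b \<in> rank_ideal n d r"
    and decomp: "\<And>x. mpoly_eval p x = (\<Sum>b\<in>B. b * mpoly_eval (Poly_Mapping.map ?h (q b)) x)"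
    using rank_ideal_decompose_over_subfield[OF is_ring_hom_comp[OF is_ring_hom_single_0 hom]
        \<open>p \<in> rank_ideal n d r\<close>] by blast
  have "mpoly_eval (Poly_Mapping.map ?h (q b)) (\<psi> \<circ> L) = 0" if "b \<in> B" for b
  proof -
    have "\<psi> 0 = 0" using hom by (simp add: is_ring_hom_def)
    then have "Poly_Mapping.map ?h (q b) = Poly_Mapping.map \<psi> (Poly_Mapping.map (Poly_Mapping.single 0) (q b))"
      by (simp add: poly_mapping_map_map)
    then show ?thesis
      using rank_ideal_vanishes_at_polynomial_tensor[OF assms(1,2) q[OF that]] \<open>\<psi> 0 = 0\<close>
      by (simp add: mpoly_eval_map_hom[OF hom])
  qed
  then have "mpoly_eval p (\<psi> \<circ> L) = 0" by (simp add: decomp)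
  then show "mpoly_eval p (\<lambda>is. \<psi> (L is)) = 0" by (simp add: comp_def)
qed

theorem corollaryA2:
  fixes L :: "nat list \<Rightarrow> (('m::{finite,linorder} \<Rightarrow>\<^sub>0 nat) \<Rightarrow>\<^sub>0 'a::field)"
    and n d r :: nat
  assumes "infinite (UNIV :: 'a set)"
    and "\<forall>\<beta> :: 'm \<Rightarrow> 'a. border_rank_le n d r (\<lambda>is. mpoly_eval (L is) \<beta>)"
  shows "border_rank_le n d r (\<lambda>is. to_fract (L is)) \<and>
         border_rank_le n d r (\<lambda>is. to_ac (to_fract (L is)))"
proof
  show "border_rank_le n d r (\<lambda>is. to_fract (L is))"
    using assms is_ring_hom_to_fract by (rule border_rank_le_ring_hom_image)
  show "border_rank_le n d r (\<lambda>is. to_ac (to_fract (L is)))"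
    using border_rank_le_ring_hom_image[OF assms is_ring_hom_comp[OF is_ring_hom_to_fract is_ring_hom_to_ac]]
    by simp
qed

end
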